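(* Let $T=(V,E)$ be a finite rooted tree with nonnegative partial costs, and $\Pr$ a probability distribution over a finite set of queries. The benefit function $B:2^V\to\mathbb{R}_{\ge0}$ is monotone (non-decreasing) and submodular.
   Context: $T=(V,E)$ is a finite rooted tree; $T(u)$ is the set of nodes of the subtree rooted at $u$ (including $u$); $A(u)$ the set of proper ancestors of $u$. Each non-leaf node is associated with a variable of a finite set $X$; $\mathrm{vars}(u)$ is the set of variables of nodes of $T(u)$; each query $q$ determines $Z_q\subseteq X$. For $R\subseteq V$, $w\in V$: $I_q(w,R)=1$ iff $w\in R$, $\mathrm{vars}(w)\subseteq Z_q$, and no $x\in A(w)\cap R$ has $\mathrm{vars}(x)\subseteq Z_q$; else $0$; $\mathbb{E}[I(w,R)]=\sum_q\Pr(q)I_q(w,R)$. Each node $x$ has partial cost $c(x)\ge0$, total cost $C(w)=\sum_{x\in T(w)}c(x)$. Benefit: $B(R)=\sum_{w\in R}\mathbb{E}[I(w,R)]C(w)$. *)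

theory Defs
  imports Complex_Main
begin

text \<open>A finite rooted tree on node set V with root r, given by a parent function par
  (par is only meaningful on V - {r}).\<close>
definition rooted_tree :: "'a set \<Rightarrow> 'a \<Rightarrow> ('a \<Rightarrow> 'a) \<Rightarrow> bool" where
  "rooted_tree V r par \<longleftrightarrow> finite V \<and> r \<in> V \<and>
     (\<forall>v\<in>V. v \<noteq> r \<longrightarrow> par v \<in> V) \<and>
     (\<forall>v\<in>V. \<exists>n. (par ^^ n) v = r)"

definition ancestors :: "'a \<Rightarrow> ('a \<Rightarrow> 'a) \<Rightarrow> 'a \<Rightarrow> 'a set" where
  "ancestors r par u = {(par ^^ k) u | k. 0 < k \<and> (\<forall>j<k. (par ^^ j) u \<noteq> r)}"

definition subtree :: "'a set \<Rightarrow> 'a \<Rightarrow> ('a \<Rightarrow> 'a) \<Rightarrow> 'a \<Rightarrow> 'a set" where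
  "subtree V r par u = {v \<in> V. v = u \<or> u \<in> ancestors r par v}"

definition is_leaf :: "'a set \<Rightarrow> 'a \<Rightarrow> ('a \<Rightarrow> 'a) \<Rightarrow> 'a \<Rightarrow> bool" where
  "is_leaf V r par u \<longleftrightarrow> subtree V r par u = {u}"

definition vars :: "'a set \<Rightarrow> 'a \<Rightarrow> ('a \<Rightarrow> 'a) \<Rightarrow> ('a \<Rightarrow> 'x) \<Rightarrow> 'a \<Rightarrow> 'x set" where
  "vars V r par var u = var ` {x \<in> subtree V r par u. \<not> is_leaf V r par x}"

definition indic :: "'a set \<Rightarrow> 'a \<Rightarrow> ('a \<Rightarrow> 'a) \<Rightarrow> ('a \<Rightarrow> 'x) \<Rightarrow> 'x set \<Rightarrow> 'a \<Rightarrow> 'a set \<Rightarrow> real" where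
  "indic V r par var Zq w R =
     (if w \<in> R \<and> vars V r par var w \<subseteq> Zq \<and>
         \<not> (\<exists>x \<in> ancestors r par w \<inter> R. vars V r par var x \<subseteq> Zq)
      then 1 else 0)"

definition total_cost :: "'a set \<Rightarrow> 'a \<Rightarrow> ('a \<Rightarrow> 'a) \<Rightarrow> ('a \<Rightarrow> real) \<Rightarrow> 'a \<Rightarrow> real" where
  "total_cost V r par c w = (\<Sum>x \<in> subtree V r par w. c x)"

text \<open>B(R) = sum over w in R of E[I(w,R)] * C(w); queries range over the finite set Q
  with probabilities P and Z q the variable set determined by query q.\<close>
definition benefit :: "'a set \<Rightarrow> 'a \<Rightarrow> ('a \<Rightarrow> 'a) \<Rightarrow> ('a \<Rightarrow> 'x) \<Rightarrow> ('a \<Rightarrow> real)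
    \<Rightarrow> 'q set \<Rightarrow> ('q \<Rightarrow> real) \<Rightarrow> ('q \<Rightarrow> 'x set) \<Rightarrow> 'a set \<Rightarrow> real" where
  "benefit V r par var c Q P Z R =
     (\<Sum>w \<in> R. (\<Sum>q \<in> Q. P q * indic V r par var (Z q) w R) * total_cost V r par c w)"

end

theory Submission
  imports Defs
begin

text \<open>For a fixed query the sum of the I_q(w,R) C(w) is the total cost of the union of the
  subtrees T(w) over the nodes w \<in> R with vars(w) \<subseteq> Z_q: the indicator selects exactly the
  topmost such nodes, their subtrees are pairwise disjoint, and every other such subtree lies
  inside one of them. A cost of a union of sets indexed by R is monotone and submodular in R
  for nonnegative costs, and both properties survive taking the expectation over queries.\<close>

lemma funpow_diff: "a \<le> j \<Longrightarrow> (f ^^ j) x = (f ^^ (j - a)) ((f ^^ a) x)"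
  by (metis funpow_add le_add_diff_inverse2 o_apply)

lemma sum_Un_diff_sum:
  fixes c :: "'a \<Rightarrow> 'b::ab_group_add"
  assumes "finite A" "finite D"
  shows "sum c (A \<union> D) - sum c A = sum c (D - A)"
proof -
  have "sum c (A \<union> (D - A)) = sum c A + sum c (D - A)"
    using assms by (intro sum.union_disjoint) auto
  then show ?thesis by (simp add: Un_Diff_cancel)
qed

lemma sum_Un_diff_sum_antimono:
  fixes c :: "'a \<Rightarrow> 'b::ordered_ab_group_add"
  assumes "finite A" "finite B" "finite D" "\<forall>x\<in>D. c x \<ge> 0" "A \<subseteq> B"
  shows "sum c (B \<union> D) - sum c B \<le> sum c (A \<union> D) - sum c A"
  using assms by (simp add: sum_Un_diff_sum) (intro sum_mono2; blast)

definition ancestors_refl :: "'a \<Rightarrow> ('a \<Rightarrow> 'a) \<Rightarrow> 'a \<Rightarrow> 'a set" where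
  "ancestors_refl r par u = {(par ^^ k) u | k. \<forall>j<k. (par ^^ j) u \<noteq> r}"

lemma ancestors_refl_eq: "ancestors_refl r par u = insert u (ancestors r par u)"
  unfolding ancestors_refl_def ancestors_def
  by (auto; metis funpow_0 gr0I less_nat_zero_code)

lemma mem_subtree_iff: "v \<in> subtree V r par w \<longleftrightarrow> v \<in> V \<and> w \<in> ancestors_refl r par v"
  unfolding subtree_def ancestors_refl_eq by blast

lemma ancestors_refl_trans:
  assumes "w \<in> ancestors_refl r par x" "m \<in> ancestors_refl r par w"
  shows "m \<in> ancestors_refl r par x"
proof -
  obtain a where a: "w = (par ^^ a) x" "\<forall>j<a. (par ^^ j) x \<noteq> r"
    using assms(1) unfolding ancestors_refl_def by blast
  obtain b where b: "m = (par ^^ b) w" "\<forall>j<b. (par ^^ j) w \<noteq> r"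
    using assms(2) unfolding ancestors_refl_def by blast
  have "m = (par ^^ (b + a)) x" using a b by (simp add: funpow_add)
  moreover have "(par ^^ j) x \<noteq> r" if "j < b + a" for j
  proof (cases "j < a")
    case True
    then show ?thesis using a(2) by blast
  next
    case False
    then have "(par ^^ j) x = (par ^^ (j - a)) w" using a(1) by (simp add: funpow_diff)
    then show ?thesis using b(2) that False by simp
  qed
  ultimately show ?thesis unfolding ancestors_refl_def by blast
qed

lemma ancestors_refl_linear:
  assumes "w1 \<in> ancestors_refl r par x" "w2 \<in> ancestors_refl r par x" "w1 \<noteq> w2"
  shows "w1 \<in> ancestors r par w2 \<or> w2 \<in> ancestors r par w1"
proof -
  have later: "(par ^^ b) x \<in> ancestors r par ((par ^^ a) x)"
    if "a < b" "\<forall>j<b. (par ^^ j) x \<noteq> r" for a b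
  proof -
    have "(par ^^ b) x = (par ^^ (b - a)) ((par ^^ a) x)"
      using that funpow_diff[of a b par x] by simp
    moreover have "(par ^^ j) ((par ^^ a) x) \<noteq> r" if "j < b - a" for j
      using \<open>\<forall>j<b. (par ^^ j) x \<noteq> r\<close> that by (metis funpow_add o_apply less_diff_conv)
    ultimately show ?thesis unfolding ancestors_def using \<open>a < b\<close> by force
  qed
  obtain a where a: "w1 = (par ^^ a) x" "\<forall>j<a. (par ^^ j) x \<noteq> r"
    using assms(1) unfolding ancestors_refl_def by blast
  obtain b where b: "w2 = (par ^^ b) x" "\<forall>j<b. (par ^^ j) x \<noteq> r"
    using assms(2) unfolding ancestors_refl_def by blast
  have "a < b \<or> b < a" using a b assms(3) by (metis linorder_neqE_nat)
  then show ?thesis using later a b by blast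
qed

lemma subtrees_disjoint:
  assumes "w1 \<notin> ancestors r par w2" "w2 \<notin> ancestors r par w1" "w1 \<noteq> w2"
  shows "subtree V r par w1 \<inter> subtree V r par w2 = {}"
  unfolding disjoint_iff mem_subtree_iff using ancestors_refl_linear assms by metis

lemma exists_topmost_ancestor_in:
  assumes root: "(par ^^ n) w = r" and "w \<in> S"
  shows "\<exists>m\<in>S. m \<in> ancestors_refl r par w \<and> ancestors r par m \<inter> S = {}"
proof -
  define K where "K = {k. (\<forall>j<k. (par ^^ j) w \<noteq> r) \<and> (par ^^ k) w \<in> S}"
  have "K \<subseteq> {..n}" unfolding K_def using root by (auto simp: not_le[symmetric])
  then have "finite K" by (rule finite_subset) simp
  moreover have "0 \<in> K" using \<open>w \<in> S\<close> unfolding K_def by simp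
  ultimately have "Max K \<in> K" "\<forall>i\<in>K. i \<le> Max K" by (auto intro: Max_in)
  then obtain k where "k \<in> K" and kmax: "\<And>i. i \<in> K \<Longrightarrow> i \<le> k" by blast
  then have k: "\<forall>j<k. (par ^^ j) w \<noteq> r" "(par ^^ k) w \<in> S" unfolding K_def by blast+
  define m where "m = (par ^^ k) w"
  have "ancestors r par m \<inter> S = {}"
  proof (rule ccontr)
    assume "ancestors r par m \<inter> S \<noteq> {}"
    then obtain i where i: "(par ^^ i) m \<in> S" "0 < i" "\<forall>j<i. (par ^^ j) m \<noteq> r"
      unfolding ancestors_def by blast
    have "(par ^^ j) w \<noteq> r" if "j < i + k" for j
    proof (cases "j < k")
      case True
      then show ?thesis using k(1) by blast
    next
      case False
      then have "(par ^^ j) w = (par ^^ (j - k)) m"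
        unfolding m_def by (simp add: funpow_diff)
      then show ?thesis using i(3) that False by simp
    qed
    then have "i + k \<in> K"
      using i(1) unfolding K_def m_def by (simp add: funpow_add)
    then show False using kmax i(2) by fastforce
  qed
  moreover have "m \<in> S" "m \<in> ancestors_refl r par w"
    using k unfolding m_def ancestors_refl_def by blast+
  ultimately show ?thesis by blast
qed

definition covered :: "'a set \<Rightarrow> 'a \<Rightarrow> ('a \<Rightarrow> 'a) \<Rightarrow> ('a \<Rightarrow> 'x) \<Rightarrow> 'x set \<Rightarrow> 'a set \<Rightarrow> 'a set" where
  "covered V r par var Zq R = \<Union> (subtree V r par ` {w\<in>R. vars V r par var w \<subseteq> Zq})"

lemma subtree_subset: "subtree V r par u \<subseteq> V"
  unfolding subtree_def by blast

lemma covered_subset: "covered V r par var Zq R \<subseteq> V"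
  unfolding covered_def using subtree_subset[of V r par] by blast

lemma covered_eq_topmost:
  fixes var :: "'a \<Rightarrow> 'x" and Zq :: "'x set"
  assumes tree: "rooted_tree V r par" and "R \<subseteq> V"
  defines "G \<equiv> {w\<in>R. vars V r par var w \<subseteq> Zq}"
  shows "covered V r par var Zq R = \<Union> (subtree V r par ` {w\<in>G. ancestors r par w \<inter> G = {}})"
proof
  show "covered V r par var Zq R \<subseteq> \<Union> (subtree V r par ` {w\<in>G. ancestors r par w \<inter> G = {}})"
  proof
    fix x assume "x \<in> covered V r par var Zq R"
    then obtain w where w: "w \<in> G" "x \<in> subtree V r par w"
      unfolding covered_def G_def by blast
    obtain n where "(par ^^ n) w = r"
      using tree w(1) \<open>R \<subseteq> V\<close> unfolding rooted_tree_def G_def by blast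
    then obtain m where "m \<in> G" "m \<in> ancestors_refl r par w" "ancestors r par m \<inter> G = {}"
      using exists_topmost_ancestor_in w(1) by metis
    moreover have "x \<in> subtree V r par m"
      using w(2) \<open>m \<in> ancestors_refl r par w\<close> ancestors_refl_trans
      unfolding mem_subtree_iff by fast
    ultimately show "x \<in> \<Union> (subtree V r par ` {w\<in>G. ancestors r par w \<inter> G = {}})" by blast
  qed
qed (auto simp: covered_def G_def)

lemma sum_indic_total_cost_eq_covered:
  assumes tree: "rooted_tree V r par" and "R \<subseteq> V"
  shows "(\<Sum>w\<in>R. indic V r par var Zq w R * total_cost V r par c w)
     = sum c (covered V r par var Zq R)"
proof -
  define G where "G = {w\<in>R. vars V r par var w \<subseteq> Zq}"
  define M where "M = {w\<in>G. ancestors r par w \<inter> G = {}}"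
  have "M \<subseteq> R" unfolding M_def G_def by blast
  have "finite V" using tree unfolding rooted_tree_def by blast
  then have "finite R" "finite M"
    using \<open>R \<subseteq> V\<close> \<open>M \<subseteq> R\<close> finite_subset by metis+
  have "(\<Sum>w\<in>R. indic V r par var Zq w R * total_cost V r par c w)
      = (\<Sum>w\<in>R. if w \<in> M then total_cost V r par c w else 0)"
    unfolding indic_def M_def G_def by (rule sum.cong) auto
  also have "\<dots> = (\<Sum>w\<in>M. total_cost V r par c w)"
    using \<open>finite R\<close> \<open>M \<subseteq> R\<close> by (simp add: sum.If_cases Int_absorb1)
  also have "\<dots> = sum c (\<Union> (subtree V r par ` M))"
    unfolding total_cost_def
  proof (rule sum.UNION_disjoint[symmetric])
    show "\<forall>i\<in>M. finite (subtree V r par i)"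
      using finite_subset[OF subtree_subset \<open>finite V\<close>] by blast
    show "\<forall>i\<in>M. \<forall>j\<in>M. i \<noteq> j \<longrightarrow> subtree V r par i \<inter> subtree V r par j = {}"
    proof (intro ballI impI)
      fix i j assume "i \<in> M" "j \<in> M" "i \<noteq> j"
      then show "subtree V r par i \<inter> subtree V r par j = {}"
        unfolding M_def by (intro subtrees_disjoint) auto
    qed
  qed fact
  also have "\<Union> (subtree V r par ` M) = covered V r par var Zq R"
    unfolding M_def G_def by (rule covered_eq_topmost[OF tree \<open>R \<subseteq> V\<close>, symmetric])
  finally show ?thesis .
qed

lemma benefit_eq_expected_covered_cost:
  assumes "rooted_tree V r par" and "R \<subseteq> V"
  shows "benefit V r par var c Q P Z R = (\<Sum>q\<in>Q. P q * sum c (covered V r par var (Z q) R))"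
proof -
  have "benefit V r par var c Q P Z R =
     (\<Sum>q\<in>Q. P q * (\<Sum>w\<in>R. indic V r par var (Z q) w R * total_cost V r par c w))"
    unfolding benefit_def
    by (simp add: sum_distrib_right sum_distrib_left mult.assoc sum.swap[of _ R])
  also have "\<dots> = (\<Sum>q\<in>Q. P q * sum c (covered V r par var (Z q) R))"
    by (simp only: sum_indic_total_cost_eq_covered[OF assms])
  finally show ?thesis .
qed

lemma covered_insert:
  "covered V r par var Zq (insert x R) =
     covered V r par var Zq R \<union> (if vars V r par var x \<subseteq> Zq then subtree V r par x else {})"
  unfolding covered_def by auto

lemma covered_mono: "R \<subseteq> S \<Longrightarrow> covered V r par var Zq R \<subseteq> covered V r par var Zq S"
  unfolding covered_def by blast

lemma covered_cost_mono:
  fixes c :: "'a \<Rightarrow> 'b::ordered_comm_monoid_add"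
  assumes "finite V" "\<forall>x\<in>V. c x \<ge> 0" "R \<subseteq> S"
  shows "sum c (covered V r par var Zq R) \<le> sum c (covered V r par var Zq S)"
  by (rule sum_mono2[OF finite_subset[OF covered_subset \<open>finite V\<close>] covered_mono[OF \<open>R \<subseteq> S\<close>]])
    (use assms(2) covered_subset[of V r par var Zq S] in blast)

lemma covered_cost_submodular:
  fixes c :: "'a \<Rightarrow> 'b::ordered_ab_group_add"
  assumes "finite V" "\<forall>x\<in>V. c x \<ge> 0" "R \<subseteq> S"
  shows "sum c (covered V r par var Zq (insert x S)) - sum c (covered V r par var Zq S)
    \<le> sum c (covered V r par var Zq (insert x R)) - sum c (covered V r par var Zq R)"
  unfolding covered_insert
  using assms subtree_subset[of V r par x] finite_subset[OF covered_subset \<open>finite V\<close>]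
    finite_subset[OF subtree_subset \<open>finite V\<close>]
  by (intro sum_Un_diff_sum_antimono covered_mono) auto

theorem lemma7:
  fixes V :: "'a set" and r :: 'a and par :: "'a \<Rightarrow> 'a" and var :: "'a \<Rightarrow> 'x"
    and X :: "'x set" and c :: "'a \<Rightarrow> real"
    and Q :: "'q set" and P :: "'q \<Rightarrow> real" and Z :: "'q \<Rightarrow> 'x set"
  assumes tree: "rooted_tree V r par"
    and X_fin: "finite X"
    and var_X: "\<forall>u\<in>V. \<not> is_leaf V r par u \<longrightarrow> var u \<in> X"
    and c_nonneg: "\<forall>x\<in>V. c x \<ge> 0"
    and Q_fin: "finite Q"
    and P_nonneg: "\<forall>q\<in>Q. P q \<ge> 0"
    and P_sum: "(\<Sum>q\<in>Q. P q) = 1"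
    and Z_X: "\<forall>q\<in>Q. Z q \<subseteq> X"
  shows "(\<forall>R. R \<subseteq> V \<longrightarrow> benefit V r par var c Q P Z R \<ge> 0)
    \<and> (\<forall>R S. R \<subseteq> S \<and> S \<subseteq> V \<longrightarrow>
          benefit V r par var c Q P Z R \<le> benefit V r par var c Q P Z S)
    \<and> (\<forall>R S x. R \<subseteq> S \<and> S \<subseteq> V \<and> x \<in> V - S \<longrightarrow>
          benefit V r par var c Q P Z (insert x S) - benefit V r par var c Q P Z S
          \<le> benefit V r par var c Q P Z (insert x R) - benefit V r par var c Q P Z R)"
proof -
  have "finite V" using tree unfolding rooted_tree_def by blast
  have B: "benefit V r par var c Q P Z R = (\<Sum>q\<in>Q. P q * sum c (covered V r par var (Z q) R))"
    if "R \<subseteq> V" for R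
    using benefit_eq_expected_covered_cost[OF tree that] .
  show ?thesis
  proof (intro conjI allI impI)
    show "benefit V r par var c Q P Z R \<ge> 0" if "R \<subseteq> V" for R
      unfolding B[OF that] using P_nonneg c_nonneg covered_subset[of V r par var]
      by (intro sum_nonneg mult_nonneg_nonneg) (auto dest!: subsetD)
    show "benefit V r par var c Q P Z R \<le> benefit V r par var c Q P Z S"
      if "R \<subseteq> S \<and> S \<subseteq> V" for R S
      using that P_nonneg covered_cost_mono[OF \<open>finite V\<close> c_nonneg]
      by (subst (1 2) B) (auto intro!: sum_mono[where K = Q] mult_left_mono)
    show "benefit V r par var c Q P Z (insert x S) - benefit V r par var c Q P Z S
        \<le> benefit V r par var c Q P Z (insert x R) - benefit V r par var c Q P Z R"
      if "R \<subseteq> S \<and> S \<subseteq> V \<and> x \<in> V - S" for R S x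
      using that P_nonneg covered_cost_submodular[OF \<open>finite V\<close> c_nonneg]
      by (subst (1 2 3 4) B)
        (auto simp: sum_subtractf[symmetric] right_diff_distrib[symmetric]
          intro!: sum_mono[where K = Q] mult_left_mono)
  qed
qed

end
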